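(* Let $G$ be a graph and $X$ an $\operatorname{IR}(G)$-set. Then every flip-set $X'$ of $X$ is also an $\operatorname{IR}(G)$-set.
   Context: All graphs are finite and simple. For a graph $G=(V,E)$, $D\subseteq V$ and $v\in D$, $\operatorname{PN}(v,D)=N[v]-N[D-\{v\}]$ (closed neighbourhoods) and the set of external private neighbours is $\operatorname{EPN}(v,D)=\operatorname{PN}(v,D)-D$. A set $D$ is irredundant if $\operatorname{PN}(v,D)\neq\varnothing$ for every $v\in D$; $\operatorname{IR}(G)$ is the largest cardinality of an irredundant set, and an $\operatorname{IR}(G)$-set is an irredundant set of that cardinality. Flip-set: given an irredundant set $X$, split $X$ into disjoint sets $Y$ and $Z$ (either possibly empty) with $X=Y\cup Z$, such that every vertex of $Z$ is isolated in the induced subgraph $G[X]$ and every vertex $y\in Y$ has $\operatorname{EPN}(y,X)\neq\varnothing$; choose $y'\in\operatorname{EPN}(y,X)$ for each $y\in Y$ and let $Y'=\{y':y\in Y\}$. Then $X'=(X-Y)\cup Y'$ is called a flip-set of $X$ (using $Y'$). *)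

theory Defs
  imports Main
begin

definition graph :: "'a set \<Rightarrow> ('a \<Rightarrow> 'a \<Rightarrow> bool) \<Rightarrow> bool" where
  "graph V E \<longleftrightarrow> finite V \<and> (\<forall>u v. E u v \<longrightarrow> u \<in> V \<and> v \<in> V)
     \<and> (\<forall>u v. E u v \<longrightarrow> E v u) \<and> (\<forall>v. \<not> E v v)"

definition cnbhd :: "'a set \<Rightarrow> ('a \<Rightarrow> 'a \<Rightarrow> bool) \<Rightarrow> 'a \<Rightarrow> 'a set" where
  "cnbhd V E v = {u \<in> V. u = v \<or> E v u}"

definition cnbhd_set :: "'a set \<Rightarrow> ('a \<Rightarrow> 'a \<Rightarrow> bool) \<Rightarrow> 'a set \<Rightarrow> 'a set" where
  "cnbhd_set V E S = (\<Union>v\<in>S. cnbhd V E v)"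

definition PN :: "'a set \<Rightarrow> ('a \<Rightarrow> 'a \<Rightarrow> bool) \<Rightarrow> 'a \<Rightarrow> 'a set \<Rightarrow> 'a set" where
  "PN V E v D = cnbhd V E v - cnbhd_set V E (D - {v})"

definition EPN :: "'a set \<Rightarrow> ('a \<Rightarrow> 'a \<Rightarrow> bool) \<Rightarrow> 'a \<Rightarrow> 'a set \<Rightarrow> 'a set" where
  "EPN V E v D = PN V E v D - D"

definition irredundant :: "'a set \<Rightarrow> ('a \<Rightarrow> 'a \<Rightarrow> bool) \<Rightarrow> 'a set \<Rightarrow> bool" where
  "irredundant V E D \<longleftrightarrow> D \<subseteq> V \<and> (\<forall>v\<in>D. PN V E v D \<noteq> {})"

definition IR :: "'a set \<Rightarrow> ('a \<Rightarrow> 'a \<Rightarrow> bool) \<Rightarrow> nat" where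
  "IR V E = Max (card ` {D. irredundant V E D})"

definition IR_set :: "'a set \<Rightarrow> ('a \<Rightarrow> 'a \<Rightarrow> bool) \<Rightarrow> 'a set \<Rightarrow> bool" where
  "IR_set V E D \<longleftrightarrow> irredundant V E D \<and> card D = IR V E"

definition flip_set :: "'a set \<Rightarrow> ('a \<Rightarrow> 'a \<Rightarrow> bool) \<Rightarrow> 'a set \<Rightarrow> 'a set \<Rightarrow> bool" where
  "flip_set V E X X' \<longleftrightarrow> irredundant V E X \<and>
     (\<exists>Y Z f. X = Y \<union> Z \<and> Y \<inter> Z = {} \<and>
        (\<forall>z\<in>Z. \<forall>x\<in>X. \<not> E z x) \<and>
        (\<forall>y\<in>Y. EPN V E y X \<noteq> {}) \<and>
        (\<forall>y\<in>Y. f y \<in> EPN V E y X) \<and>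
        X' = (X - Y) \<union> f ` Y)"

end

theory Submission
  imports Defs
begin

text \<open>Write X' = (X - Y) \<union> f ` Y. A vertex z of X - Y keeps itself as private neighbour,
  since it has no neighbour in X and the new vertices f y are private to other vertices of X.
  The new vertex f y has y as private neighbour: vertices of X - Y are not adjacent to y, and
  any other f y' is private to y' and thus not adjacent to y. Distinct y have distinct f y, for
  f y is adjacent to y but private to itself, so |X'| = |X|.\<close>

lemma mem_PN_iff:
  "u \<in> PN V E v D \<longleftrightarrow> u \<in> V \<and> (u = v \<or> E v u) \<and> (\<forall>w\<in>D - {v}. u \<noteq> w \<and> \<not> E w u)"
  unfolding PN_def cnbhd_set_def cnbhd_def by blast

lemma mem_EPN_iff:
  "u \<in> EPN V E v D \<longleftrightarrow> u \<in> PN V E v D \<and> u \<notin> D"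
  unfolding EPN_def by blast

lemma EPN_adjacent:
  assumes "u \<in> EPN V E v D" and "v \<in> D"
  shows "E v u"
  using assms by (auto simp: mem_EPN_iff mem_PN_iff)

lemma inj_on_EPN_choice:
  assumes "Y \<subseteq> X" and "\<forall>y\<in>Y. f y \<in> EPN V E y X"
  shows "inj_on f Y"
proof (rule inj_onI)
  fix a b assume a: "a \<in> Y" and b: "b \<in> Y" and fab: "f a = f b"
  have "f a \<in> EPN V E a X" and "a \<in> X" using assms a by blast+
  then have "E a (f a)" by (rule EPN_adjacent)
  with fab have "E a (f b)" by simp
  with assms a b show "a = b"
    by (auto simp: mem_EPN_iff mem_PN_iff)
qed

lemma card_Diff_Un_image:
  assumes "finite X" and "Y \<subseteq> X" and "inj_on f Y" and "f ` Y \<inter> X = {}"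
  shows "card ((X - Y) \<union> f ` Y) = card X"
proof -
  have "card ((X - Y) \<union> f ` Y) = card (X - Y) + card (f ` Y)"
    using assms by (intro card_Un_disjoint) (auto intro: finite_subset)
  also have "\<dots> = card (X - Y) + card Y"
    using card_image[OF \<open>inj_on f Y\<close>] by simp
  also have "\<dots> = card X"
    using assms by (simp add: card_Diff_subset card_mono finite_subset)
  finally show ?thesis .
qed

context
  fixes V E X Y f
  assumes graph: "graph V E"
    and X_sub: "X \<subseteq> V" and Y_sub: "Y \<subseteq> X"
    and isolated: "\<forall>z\<in>X - Y. \<forall>x\<in>X. \<not> E z x"
    and f_EPN: "\<forall>y\<in>Y. f y \<in> EPN V E y X"
begin

private lemma sym: "E u v \<Longrightarrow> E v u"
  using graph unfolding graph_def by blast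

private lemma f_private:
  assumes "y \<in> Y" and "w \<in> X" and "w \<noteq> y"
  shows "f y \<notin> X" and "\<not> E w (f y)"
  using f_EPN assms by (auto simp: mem_EPN_iff mem_PN_iff)

lemma isolated_mem_PN_flip:
  assumes "z \<in> X - Y"
  shows "z \<in> PN V E z ((X - Y) \<union> f ` Y)"
proof -
  have "z \<noteq> w \<and> \<not> E w z" if w: "w \<in> (X - Y) \<union> f ` Y - {z}" for w
  proof (cases "w \<in> X - Y")
    case True
    then show ?thesis using w assms isolated sym by blast
  next
    case False
    then obtain y where "y \<in> Y" and "w = f y" using w by blast
    then show ?thesis using f_private[of y z] assms sym by blast
  qed
  moreover have "z \<in> V" using assms X_sub by blast
  ultimately show ?thesis unfolding mem_PN_iff by blast
qed

lemma mem_PN_flip_image: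
  assumes "y \<in> Y"
  shows "y \<in> PN V E (f y) ((X - Y) \<union> f ` Y)"
proof -
  have "y \<noteq> w \<and> \<not> E w y" if w: "w \<in> (X - Y) \<union> f ` Y - {f y}" for w
  proof (cases "w \<in> X - Y")
    case True
    then show ?thesis using assms Y_sub isolated by blast
  next
    case False
    then obtain y' where "y' \<in> Y" "w = f y'" and "y' \<noteq> y" using w by blast
    then show ?thesis using f_private[of y' y] assms Y_sub sym by blast
  qed
  moreover have "y \<in> V" using assms Y_sub X_sub by blast
  moreover have "E (f y) y"
    using EPN_adjacent[of "f y" V E y X] f_EPN assms Y_sub sym by blast
  ultimately show ?thesis unfolding mem_PN_iff by blast
qed

lemma irredundant_flip: "irredundant V E ((X - Y) \<union> f ` Y)"
proof -
  have "f ` Y \<subseteq> V"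
    using f_EPN by (auto simp: mem_EPN_iff mem_PN_iff)
  with X_sub isolated_mem_PN_flip mem_PN_flip_image show ?thesis
    unfolding irredundant_def by blast
qed

lemma card_flip: "card ((X - Y) \<union> f ` Y) = card X"
proof (rule card_Diff_Un_image)
  show "finite X" using graph X_sub unfolding graph_def by (blast intro: finite_subset)
  show "inj_on f Y" using inj_on_EPN_choice Y_sub f_EPN by blast
  show "f ` Y \<inter> X = {}" using f_EPN by (auto simp: mem_EPN_iff)
qed (rule Y_sub)

end

theorem proposition2p2:
  assumes "graph V E"
    and "IR_set V E X"
    and "flip_set V E X X'"
  shows "IR_set V E X'"
proof -
  obtain Y Z f where "X = Y \<union> Z" and "Y \<inter> Z = {}"
    and isolated: "\<forall>z\<in>Z. \<forall>x\<in>X. \<not> E z x"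
    and f_EPN: "\<forall>y\<in>Y. f y \<in> EPN V E y X" and X': "X' = (X - Y) \<union> f ` Y"
    using assms(3) unfolding flip_set_def by blast
  then have "Y \<subseteq> X" and "X - Y = Z" by blast+
  moreover have "X \<subseteq> V" using assms(2) unfolding IR_set_def irredundant_def by blast
  ultimately have "irredundant V E X'" and "card X' = card X"
    using irredundant_flip card_flip assms(1) isolated f_EPN unfolding X' by auto
  with assms(2) show ?thesis unfolding IR_set_def by simp
qed

end
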